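(* Let $\sigma,b$ and $x$ be as in the context. There exist $\rho,\delta^*\in1/\mathcal{C}$ such that for every $y\in\mathbb{R}^2$ and every $\delta\le\delta^*$: if $|x-y|_{A_\delta(x)}\le\rho$, then for all $\xi\in\mathbb{R}^2$ \[ \frac14|\xi|_{A_\delta(x)}\le|\xi|_{A_\delta(y)}\le4|\xi|_{A_\delta(x)}. \]
   Context: $\sigma,b:\mathbb{R}^2\to\mathbb{R}^2$ are $C^3$; $\partial_gf=\sum_ig^i\partial_{x_i}f$, $[f,g]=\partial_gf-\partial_fg$. $A_\delta(z)$ is the matrix with columns $\delta^{1/2}\sigma(z),\delta^{3/2}[b,\sigma](z)$, and $|\xi|_{A_\delta(z)}=|A_\delta(z)^{-1}\xi|$. $\lambda(z)$ is the smallest eigenvalue of $A(z)A(z)^T$ with $A(z)$ having columns $\sigma(z),[b,\sigma](z)$; $n(z)=\sum_{k=0}^3\sum_{|\alpha|=k}(|\partial^\alpha b(z)|+|\partial^\alpha\sigma(z)|)$. Local hypotheses: $\lambda(z)\ge\Lambda\in(0,1]$, $n(z)\le N$ ($N\ge1$) for $|z-x|<1$; there is a differentiable $\kappa_\sigma$ with $\partial_\sigma\sigma=\kappa_\sigma\sigma$ and $|\kappa_\sigma|,|\nabla\kappa_\sigma|\le n$. $\mathcal{C}=\{K(N/\Lambda)^q:K,q\ge1\text{ universal}\}$, $1/\mathcal{C}=\{c:1/c\in\mathcal{C}\}$. *)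

theory Defs
  imports "HOL-Analysis.Analysis"
begin

type_synonym R2 = "real^2"

definition pd :: "2 \<Rightarrow> (R2 \<Rightarrow> 'b::real_normed_vector) \<Rightarrow> R2 \<Rightarrow> 'b" where
  "pd i f z = frechet_derivative f (at z) (axis i 1)"

definition pds :: "2 list \<Rightarrow> (R2 \<Rightarrow> 'b::real_normed_vector) \<Rightarrow> R2 \<Rightarrow> 'b" where
  "pds is f = foldr pd is f"

definition pdm :: "nat \<Rightarrow> nat \<Rightarrow> (R2 \<Rightarrow> 'b::real_normed_vector) \<Rightarrow> R2 \<Rightarrow> 'b" where
  "pdm j k f = pds (replicate j 1 @ replicate k 2) f"

definition C3 :: "(R2 \<Rightarrow> R2) \<Rightarrow> bool" where
  "C3 f \<longleftrightarrow> (\<forall>is. length is \<le> 2 \<longrightarrow> (\<forall>z. pds is f differentiable (at z)))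
            \<and> (\<forall>is. length is \<le> 3 \<longrightarrow> continuous_on UNIV (pds is f))"

definition dd :: "(R2 \<Rightarrow> R2) \<Rightarrow> (R2 \<Rightarrow> 'b::real_normed_vector) \<Rightarrow> R2 \<Rightarrow> 'b" where
  "dd g f z = (\<Sum>i\<in>UNIV. (g z $ i) *\<^sub>R pd i f z)"

definition lie :: "(R2 \<Rightarrow> R2) \<Rightarrow> (R2 \<Rightarrow> R2) \<Rightarrow> R2 \<Rightarrow> R2" where
  "lie f g z = dd g f z - dd f g z"

definition cols :: "R2 \<Rightarrow> R2 \<Rightarrow> real^2^2" where
  "cols u v = (\<chi> i j. if j = 1 then u $ i else v $ i)"

definition Adelta :: "(R2 \<Rightarrow> R2) \<Rightarrow> (R2 \<Rightarrow> R2) \<Rightarrow> real \<Rightarrow> R2 \<Rightarrow> real^2^2" where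
  "Adelta \<sigma> b \<delta> z = cols (sqrt \<delta> *\<^sub>R \<sigma> z) ((\<delta> powr (3/2)) *\<^sub>R lie b \<sigma> z)"

definition Amat :: "(R2 \<Rightarrow> R2) \<Rightarrow> (R2 \<Rightarrow> R2) \<Rightarrow> R2 \<Rightarrow> real^2^2" where
  "Amat \<sigma> b z = cols (\<sigma> z) (lie b \<sigma> z)"

definition anorm :: "real^2^2 \<Rightarrow> R2 \<Rightarrow> real" where
  "anorm A \<xi> = norm (matrix_inv A *v \<xi>)"

definition min_eig :: "real^2^2 \<Rightarrow> real" where
  "min_eig M = Min {t. det (M - t *\<^sub>R mat 1) = 0}"

definition lam :: "(R2 \<Rightarrow> R2) \<Rightarrow> (R2 \<Rightarrow> R2) \<Rightarrow> R2 \<Rightarrow> real" where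
  "lam \<sigma> b z = min_eig (Amat \<sigma> b z ** transpose (Amat \<sigma> b z))"

definition nfun :: "(R2 \<Rightarrow> R2) \<Rightarrow> (R2 \<Rightarrow> R2) \<Rightarrow> R2 \<Rightarrow> real" where
  "nfun \<sigma> b z = (\<Sum>k\<in>{0..3::nat}. \<Sum>j\<in>{0..k}.
      norm (pdm j (k - j) b z) + norm (pdm j (k - j) \<sigma> z))"

definition grad :: "(R2 \<Rightarrow> real) \<Rightarrow> R2 \<Rightarrow> R2" where
  "grad f z = (\<chi> i. pd i f z)"

definition local_hyp :: "(R2 \<Rightarrow> R2) \<Rightarrow> (R2 \<Rightarrow> R2) \<Rightarrow> R2 \<Rightarrow> real \<Rightarrow> real \<Rightarrow> bool" where
  "local_hyp \<sigma> b x \<Lambda> N \<longleftrightarrow>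
     C3 \<sigma> \<and> C3 b \<and> 0 < \<Lambda> \<and> \<Lambda> \<le> 1 \<and> 1 \<le> N \<and>
     (\<forall>z. dist z x < 1 \<longrightarrow> lam \<sigma> b z \<ge> \<Lambda> \<and> nfun \<sigma> b z \<le> N) \<and>
     (\<exists>\<kappa>::R2 \<Rightarrow> real. \<forall>z. dist z x < 1 \<longrightarrow>
        \<kappa> differentiable (at z) \<and>
        dd \<sigma> \<sigma> z = \<kappa> z *\<^sub>R \<sigma> z \<and>
        \<bar>\<kappa> z\<bar> \<le> nfun \<sigma> b z \<and> norm (grad \<kappa> z) \<le> nfun \<sigma> b z)"

end

theory Submission
  imports Defs
begin

(* Write s = sqrt delta, so that A_delta(z) has columns s sigma(z) and s^3 [b,sigma](z), and M = N/Lambda.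
   The hypothesis |x - y|_{A_delta(x)} <= rho means y - x = -(a s sigma(x) + c s^3 [b,sigma](x)) with
   |a|, |c| <= rho, so |y - x| = O(rho s).  Taylor's formula together with d_sigma sigma = kappa sigma
   gives sigma(y) = (1 - a s kappa(x)) sigma(x) + O(rho s^2): to first order, moving in the direction
   sigma(x) keeps sigma parallel to sigma(x).  Expanding the O(rho s^2) remainder in the basis
   sigma(x), [b,sigma](x) costs the factor s^-2 only in the [b,sigma]-coordinate, which A_delta weights
   by s^3 rather than s; similarly [b,sigma](y) = [b,sigma](x) + O(rho s).  As |det A(z)| >= Lambda
   (from lambda >= Lambda) bounds these coordinates, A_delta(y) = A_delta(x) (I + F) with |F| = O(rho M^8),
   and for rho = 1/(3000 M^8) the two norms agree up to a factor 2. *)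

section \<open>Calculus along coordinate lines\<close>

lemma has_vector_derivative_along_line:
  fixes f :: "'a::real_normed_vector \<Rightarrow> 'b::real_normed_vector"
  assumes "f differentiable (at (p + r *\<^sub>R e))"
  shows "((\<lambda>s. f (p + s *\<^sub>R e)) has_vector_derivative frechet_derivative f (at (p + r *\<^sub>R e)) e)
           (at r within T)"
proof -
  let ?D = "frechet_derivative f (at (p + r *\<^sub>R e))"
  have D: "(f has_derivative ?D) (at (p + r *\<^sub>R e))"
    using assms frechet_derivative_works by blast
  have "((\<lambda>s. p + s *\<^sub>R e) has_derivative (\<lambda>s. s *\<^sub>R e)) (at r within T)"
    by (auto intro!: derivative_eq_intros)
  from diff_chain_within[OF this has_derivative_at_withinI[OF D]]
  have "((\<lambda>s. f (p + s *\<^sub>R e)) has_derivative (\<lambda>s. ?D (s *\<^sub>R e))) (at r within T)"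
    by (simp add: o_def)
  then show ?thesis
    unfolding has_vector_derivative_def using linear_scale[OF has_derivative_linear[OF D]] by simp
qed

lemma norm_diff_le_segment_real:
  fixes g :: "real \<Rightarrow> 'b::real_normed_vector"
  assumes "\<And>s. s \<in> closed_segment 0 t \<Longrightarrow> (g has_vector_derivative g' s) (at s within closed_segment 0 t)"
    and "\<And>s. s \<in> closed_segment 0 t \<Longrightarrow> norm (g' s) \<le> B"
  shows "norm (g t - g 0) \<le> B * \<bar>t\<bar>"
proof -
  have "norm (g t - g 0) \<le> B * norm (t - 0)"
  proof (rule differentiable_bound[where f'="\<lambda>s h. h *\<^sub>R g' s"])
    show "\<And>s. s \<in> closed_segment 0 t \<Longrightarrow> (g has_derivative (\<lambda>h. h *\<^sub>R g' s)) (at s within closed_segment 0 t)"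
      using assms(1) unfolding has_vector_derivative_def by blast
    show "\<And>s. s \<in> closed_segment 0 t \<Longrightarrow> onorm (\<lambda>h. h *\<^sub>R g' s) \<le> B"
      using assms(2) by (intro onorm_le) (metis abs_ge_zero mult.commute mult_left_mono norm_scaleR real_norm_def)
  qed auto
  then show ?thesis by simp
qed

lemma line_in_convex:
  assumes "convex S" "p \<in> S" "p + t *\<^sub>R e \<in> S" "s \<in> closed_segment 0 t"
  shows "p + s *\<^sub>R e \<in> S"
proof -
  obtain u where "0 \<le> u" "u \<le> 1" "s = u * t"
    using assms(4) by (auto simp: in_segment)
  then have "p + s *\<^sub>R e = (1 - u) *\<^sub>R p + u *\<^sub>R (p + t *\<^sub>R e)"
    by (simp add: algebra_simps)
  then show ?thesis
    using convexD_alt[OF assms(1-3)] \<open>0 \<le> u\<close> \<open>u \<le> 1\<close> by simp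
qed

lemma abs_le_of_closed_segment: "s \<in> closed_segment 0 t \<Longrightarrow> \<bar>s\<bar> \<le> \<bar>t::real\<bar>"
  using dist_in_closed_segment[of s 0 t] by (simp add: dist_real_def)

lemma pd_increment_bound:
  fixes f :: "R2 \<Rightarrow> 'b::real_normed_vector"
  assumes "convex S" "p \<in> S" "p + t *\<^sub>R axis i 1 \<in> S"
    and "\<And>z. z \<in> S \<Longrightarrow> f differentiable (at z)"
    and "\<And>z. z \<in> S \<Longrightarrow> norm (pd i f z) \<le> B"
  shows "norm (f (p + t *\<^sub>R axis i 1) - f p) \<le> B * \<bar>t\<bar>"
proof -
  have "norm ((\<lambda>s. f (p + s *\<^sub>R axis i 1)) t - (\<lambda>s. f (p + s *\<^sub>R axis i 1)) 0) \<le> B * \<bar>t\<bar>"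
  proof (rule norm_diff_le_segment_real[where g'="\<lambda>s. pd i f (p + s *\<^sub>R axis i 1)"])
    fix s assume "s \<in> closed_segment 0 t"
    then have "p + s *\<^sub>R axis i 1 \<in> S" using line_in_convex assms(1-3) by blast
    then show "((\<lambda>s. f (p + s *\<^sub>R axis i 1)) has_vector_derivative pd i f (p + s *\<^sub>R axis i 1))
                 (at s within closed_segment 0 t)"
      unfolding pd_def using has_vector_derivative_along_line assms(4) by blast
    show "norm (pd i f (p + s *\<^sub>R axis i 1)) \<le> B"
      using \<open>p + s *\<^sub>R axis i 1 \<in> S\<close> assms(5) by blast
  qed
  then show ?thesis by simp
qed

lemma pd_taylor_bound:
  fixes f :: "R2 \<Rightarrow> 'b::real_normed_vector"
  assumes "convex S" "p \<in> S" "p + t *\<^sub>R axis i 1 \<in> S"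
    and "\<And>z. z \<in> S \<Longrightarrow> f differentiable (at z)"
    and "\<And>z. z \<in> S \<Longrightarrow> pd i f differentiable (at z)"
    and "\<And>z. z \<in> S \<Longrightarrow> norm (pd i (pd i f) z) \<le> B"
  shows "norm (f (p + t *\<^sub>R axis i 1) - f p - t *\<^sub>R pd i f p) \<le> B * t\<^sup>2"
proof -
  let ?g = "\<lambda>s. f (p + s *\<^sub>R axis i 1)" and ?g' = "\<lambda>s. pd i f (p + s *\<^sub>R axis i 1)"
  have "norm (?g t - ?g 0 - (t - 0) *\<^sub>R ?g' 0) \<le> norm (t - 0) * (B * \<bar>t\<bar>)"
  proof (rule vector_differentiable_bound_linearization[where S="closed_segment 0 t" and f'="?g'"])
    fix s assume s: "s \<in> closed_segment 0 t"
    then have ps: "p + s *\<^sub>R axis i 1 \<in> S" using line_in_convex assms(1-3) by blast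
    then show "(?g has_vector_derivative ?g' s) (at s within closed_segment 0 t)"
      unfolding pd_def using has_vector_derivative_along_line assms(4) by blast
    have "norm (?g' s - ?g' 0) \<le> B * \<bar>s\<bar>"
      using pd_increment_bound[OF assms(1,2) ps assms(5,6)] by simp
    also have "\<dots> \<le> B * \<bar>t\<bar>"
    proof (rule mult_left_mono)
      show "0 \<le> B" using assms(2,6) norm_ge_zero order_trans by blast
    qed (rule abs_le_of_closed_segment[OF s])
    finally show "norm (?g' s - ?g' 0) \<le> B * \<bar>t\<bar>" .
  qed auto
  then show ?thesis by (simp add: power2_eq_square abs_mult_self_eq mult.left_commute)
qed

lemma norm_vector_derivative_le:
  fixes k :: "real \<Rightarrow> 'b::real_normed_vector"
  assumes k: "(k has_vector_derivative k') (at a)"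
    and bound: "eventually (\<lambda>s. norm (k s - k a) \<le> C * \<bar>s - a\<bar>) (at a)"
  shows "norm k' \<le> C"
proof -
  define R where "R s = norm (k s - k a - (s - a) *\<^sub>R k') / \<bar>s - a\<bar>" for s
  have "(R \<longlongrightarrow> 0) (at a)"
    using k unfolding has_vector_derivative_def has_derivative_iff_norm R_def by simp
  then have lim: "((\<lambda>s. C + R s) \<longlongrightarrow> C + 0) (at a)"
    by (intro tendsto_intros)
  have "eventually (\<lambda>s. norm k' \<le> C + R s) (at a)"
    using bound eventually_neq_at_within[of a a UNIV]
  proof eventually_elim
    case (elim s)
    then have pos: "0 < \<bar>s - a\<bar>" by simp
    have "\<bar>s - a\<bar> * norm k' \<le> norm (k s - k a) + norm (k s - k a - (s - a) *\<^sub>R k')"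
      using norm_triangle_ineq4[of "k s - k a" "k s - k a - (s - a) *\<^sub>R k'"] by simp
    also have "\<dots> \<le> \<bar>s - a\<bar> * (C + R s)"
      using elim pos by (simp add: R_def algebra_simps)
    finally show ?case using pos by simp
  qed
  then show ?thesis
    using tendsto_le[OF _ lim tendsto_const] by simp
qed

lemma second_difference_bound:
  fixes f :: "R2 \<Rightarrow> 'b::real_normed_vector" and i j :: 2
  defines "ei \<equiv> axis i 1 :: R2" and "ej \<equiv> axis j 1 :: R2"
  assumes S: "convex S" and p: "p \<in> S" "p + s *\<^sub>R ei \<in> S" "p + t *\<^sub>R ej \<in> S" "p + s *\<^sub>R ei + t *\<^sub>R ej \<in> S"
    and df: "\<And>z. z \<in> S \<Longrightarrow> f differentiable (at z)"
    and dfj: "\<And>z. z \<in> S \<Longrightarrow> pd j f differentiable (at z)"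
    and B: "\<And>z. z \<in> S \<Longrightarrow> norm (pd i (pd j f) z) \<le> B"
  shows "norm ((f (p + s *\<^sub>R ei + t *\<^sub>R ej) - f (p + t *\<^sub>R ej)) - (f (p + s *\<^sub>R ei) - f p)) \<le> B * \<bar>s\<bar> * \<bar>t\<bar>"
proof -
  let ?\<phi> = "\<lambda>r. f (p + s *\<^sub>R ei + r *\<^sub>R ej) - f (p + r *\<^sub>R ej)"
  have "norm (?\<phi> t - ?\<phi> 0) \<le> (B * \<bar>s\<bar>) * \<bar>t\<bar>"
  proof (rule norm_diff_le_segment_real)
    fix r assume r: "r \<in> closed_segment 0 t"
    have pr: "p + r *\<^sub>R ej \<in> S" and psr: "p + s *\<^sub>R ei + r *\<^sub>R ej \<in> S"
      using line_in_convex[OF S p(1,3) r] line_in_convex[OF S p(2,4) r] .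
    show "(?\<phi> has_vector_derivative pd j f (p + s *\<^sub>R ei + r *\<^sub>R ej) - pd j f (p + r *\<^sub>R ej))
        (at r within closed_segment 0 t)"
      unfolding pd_def ej_def
      by (rule has_vector_derivative_diff; rule has_vector_derivative_along_line)
         (use df pr psr in \<open>auto simp: ej_def\<close>)
    have eq: "p + r *\<^sub>R ej + s *\<^sub>R axis i 1 = p + s *\<^sub>R ei + r *\<^sub>R ej"
      by (simp add: ei_def algebra_simps)
    have "norm (pd j f (p + r *\<^sub>R ej + s *\<^sub>R axis i 1) - pd j f (p + r *\<^sub>R ej)) \<le> B * \<bar>s\<bar>"
      by (rule pd_increment_bound[OF S pr _ dfj B]) (simp only: eq psr)
    then show "norm (pd j f (p + s *\<^sub>R ei + r *\<^sub>R ej) - pd j f (p + r *\<^sub>R ej)) \<le> B * \<bar>s\<bar>"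
      by (simp only: eq)
  qed
  then show ?thesis by (simp add: algebra_simps)
qed

lemma pd_increment_bound_mixed:
  fixes f :: "R2 \<Rightarrow> 'b::real_normed_vector"
  assumes S: "open S" "convex S" and p: "p \<in> S" and q: "p + t *\<^sub>R axis j 1 \<in> S"
    and df: "\<And>z. z \<in> S \<Longrightarrow> f differentiable (at z)"
    and dfj: "\<And>z. z \<in> S \<Longrightarrow> pd j f differentiable (at z)"
    and B: "\<And>z. z \<in> S \<Longrightarrow> norm (pd i (pd j f) z) \<le> B"
  shows "norm (pd i f (p + t *\<^sub>R axis j 1) - pd i f p) \<le> B * \<bar>t\<bar>"
proof -
  define ei q where "ei = (axis i 1 :: R2)" and "q = p + t *\<^sub>R axis j 1"
  obtain \<epsilon> where \<epsilon>: "0 < \<epsilon>" "ball p \<epsilon> \<subseteq> S" "ball q \<epsilon> \<subseteq> S"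
  proof -
    obtain e1 e2 where "0 < e1" "ball p e1 \<subseteq> S" "0 < e2" "ball q e2 \<subseteq> S"
      using S(1) p q openE unfolding q_def by metis
    then show thesis by (intro that[of "min e1 e2"]) auto
  qed
  define k where "k s = f (q + s *\<^sub>R ei) - f (p + s *\<^sub>R ei)" for s
  have "(k has_vector_derivative pd i f q - pd i f p) (at 0)"
    unfolding k_def pd_def ei_def
    by (rule has_vector_derivative_diff; rule has_vector_derivative_along_line[where r=0, simplified])
       (use df p q in \<open>auto simp: q_def\<close>)
  moreover have "eventually (\<lambda>s. norm (k s - k 0) \<le> (B * \<bar>t\<bar>) * \<bar>s - 0\<bar>) (at 0)"
    unfolding eventually_at
  proof (intro exI[of _ \<epsilon>] conjI ballI impI)
    fix s :: real assume "s \<noteq> 0 \<and> dist s 0 < \<epsilon>"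
    then have "p + s *\<^sub>R ei \<in> S" "q + s *\<^sub>R ei \<in> S"
      using \<epsilon> by (auto simp: ei_def dist_norm)
    then have "norm ((f (p + s *\<^sub>R ei + t *\<^sub>R axis j 1) - f (p + t *\<^sub>R axis j 1)) - (f (p + s *\<^sub>R ei) - f p))
        \<le> B * \<bar>s\<bar> * \<bar>t\<bar>"
      unfolding ei_def using second_difference_bound[OF S(2) p _ q _ df dfj B]
      by (simp add: q_def algebra_simps)
    then show "norm (k s - k 0) \<le> (B * \<bar>t\<bar>) * \<bar>s - 0\<bar>"
      by (simp add: k_def q_def algebra_simps)
  qed (rule \<epsilon>(1))
  ultimately have "norm (pd i f q - pd i f p) \<le> B * \<bar>t\<bar>"
    by (rule norm_vector_derivative_le)
  then show ?thesis by (simp add: q_def)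
qed

section \<open>Functions with bounded derivatives up to order two on a ball\<close>

lemma ball_mem_of_norm_diff_less:
  assumes "norm (y - x) < r"
  shows "x \<in> ball x r" "y \<in> ball x r"
proof -
  have "0 < r" using assms norm_ge_zero[of "y - x"] by linarith
  then show "x \<in> ball x r" "y \<in> ball x r" using assms by (auto simp: dist_norm norm_minus_commute)
qed

(* n(z) bounds the mixed second partial only in the order pd 1 (pd 2 f), so no symmetry of second
   derivatives is available; pd_increment_bound_mixed compensates for this. *)
definition C2_bounded :: "R2 set \<Rightarrow> (R2 \<Rightarrow> 'b::real_normed_vector) \<Rightarrow> real \<Rightarrow> bool" where
  "C2_bounded S f N \<longleftrightarrow> (\<forall>z\<in>S.
     f differentiable (at z) \<and> pd 1 f differentiable (at z) \<and> pd 2 f differentiable (at z) \<and>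
     norm (f z) \<le> N \<and> norm (pd 1 f z) \<le> N \<and> norm (pd 2 f z) \<le> N \<and>
     norm (pd 1 (pd 1 f) z) \<le> N \<and> norm (pd 1 (pd 2 f) z) \<le> N \<and> norm (pd 2 (pd 2 f) z) \<le> N)"

lemma coordinate_decomposition: "(y::R2) = (x + (y - x)$1 *\<^sub>R axis 1 1) + (y - x)$2 *\<^sub>R axis 2 1"
  by (simp add: vec_eq_iff forall_2 axis_def)

lemma corner_in_ball:
  assumes "norm (y - x) < r"
  shows "x + (y - x)$1 *\<^sub>R axis 1 1 \<in> ball x r"
  using component_le_norm_cart[of "y - x" 1] assms by (simp add: dist_norm)

lemma increment_via_corner:
  fixes g :: "R2 \<Rightarrow> 'b::real_normed_vector"
  assumes y: "norm (y - x) < r" and "0 \<le> L"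
    and line: "\<And>p t i. p \<in> ball x r \<Longrightarrow> p + t *\<^sub>R axis i 1 \<in> ball x r \<Longrightarrow>
                 norm (g (p + t *\<^sub>R axis i 1) - g p) \<le> L * \<bar>t\<bar>"
  shows "norm (g y - g x) \<le> 2 * L * norm (y - x)"
proof -
  define c where "c = x + (y - x)$1 *\<^sub>R axis 1 1"
  have c: "c \<in> ball x r" and yc: "y = c + (y - x)$2 *\<^sub>R axis 2 1"
    using corner_in_ball[OF y] coordinate_decomposition[of y x] by (simp_all add: c_def)
  have "norm (g c - g x) \<le> L * \<bar>(y - x)$1\<bar>" "norm (g y - g c) \<le> L * \<bar>(y - x)$2\<bar>"
    using line[of x "(y - x)$1" 1] line[of c "(y - x)$2" 2] c yc ball_mem_of_norm_diff_less[OF y]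
    by (auto simp: c_def)
  moreover have "norm (g y - g x) \<le> norm (g c - g x) + norm (g y - g c)"
    using norm_triangle_ineq[of "g c - g x" "g y - g c"] by simp
  moreover have comp: "L * \<bar>(y - x)$i\<bar> \<le> L * norm (y - x)" for i
    using component_le_norm_cart \<open>0 \<le> L\<close> by (rule mult_left_mono)
  ultimately show ?thesis using comp[of 1] comp[of 2] by linarith
qed

lemma C2_bounded_nonneg: "C2_bounded S f N \<Longrightarrow> z \<in> S \<Longrightarrow> 0 \<le> N"
  unfolding C2_bounded_def by (meson norm_ge_zero order_trans)

lemma C2_bounded_lipschitz:
  assumes f: "C2_bounded (ball x r) f N" and y: "norm (y - x) < r"
  shows "norm (f y - f x) \<le> 2 * N * norm (y - x)"
    and "norm (pd 1 f y - pd 1 f x) \<le> 2 * N * norm (y - x)"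
    and "norm (pd 2 f y - pd 2 f x) \<le> 2 * N * norm (y - x)"
proof -
  have N: "0 \<le> N" using C2_bounded_nonneg[OF f ball_mem_of_norm_diff_less(1)[OF y]] .
  have pd_f: "norm (pd i f z) \<le> N" "norm (pd i (pd 2 f) z) \<le> N" if "z \<in> ball x r" for z i
    using f[unfolded C2_bounded_def] that exhaust_2[of i] by auto
  note S = open_ball convex_ball
  note f' = f[unfolded C2_bounded_def, rule_format]
  have "norm (f (p + t *\<^sub>R axis i 1) - f p) \<le> N * \<bar>t\<bar>"
    if "p \<in> ball x r" "p + t *\<^sub>R axis i 1 \<in> ball x r" for p t i
    using that f' pd_f by (intro pd_increment_bound[OF convex_ball]) auto
  then show "norm (f y - f x) \<le> 2 * N * norm (y - x)"
    using increment_via_corner[OF y N] by blast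
  have "norm (pd 1 f (p + t *\<^sub>R axis i 1) - pd 1 f p) \<le> N * \<bar>t\<bar>"
    if "p \<in> ball x r" "p + t *\<^sub>R axis i 1 \<in> ball x r" for p t i
  proof (cases "i = 1")
    case True
    then show ?thesis using that f' by (intro pd_increment_bound[OF convex_ball]) auto
  next
    case False
    then have "i = 2" using exhaust_2 by blast
    then show ?thesis using that f' by (intro pd_increment_bound_mixed[OF S]) auto
  qed
  then show "norm (pd 1 f y - pd 1 f x) \<le> 2 * N * norm (y - x)"
    using increment_via_corner[OF y N] by blast
  have "norm (pd 2 f (p + t *\<^sub>R axis i 1) - pd 2 f p) \<le> N * \<bar>t\<bar>"
    if "p \<in> ball x r" "p + t *\<^sub>R axis i 1 \<in> ball x r" for p t i
    using that f' pd_f by (intro pd_increment_bound[OF convex_ball]) auto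
  then show "norm (pd 2 f y - pd 2 f x) \<le> 2 * N * norm (y - x)"
    using increment_via_corner[OF y N] by blast
qed

lemma C2_bounded_taylor:
  assumes f: "C2_bounded (ball x r) f N" and y: "norm (y - x) < r"
  shows "norm (f y - f x - dd (\<lambda>_. y - x) f x) \<le> 3 * N * (norm (y - x))\<^sup>2"
proof -
  define h1 h2 where "h1 = (y - x)$1" and "h2 = (y - x)$2"
  define c where "c = x + h1 *\<^sub>R axis 1 1"
  have yc_eq: "y = c + h2 *\<^sub>R axis 2 1"
    using coordinate_decomposition[of y x] by (simp add: c_def h1_def h2_def)
  have x: "x \<in> ball x r" and yc: "c + h2 *\<^sub>R axis 2 1 \<in> ball x r"
    using ball_mem_of_norm_diff_less[OF y] unfolding yc_eq[symmetric] by simp_all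
  have c: "c \<in> ball x r"
    using corner_in_ball[OF y] unfolding c_def h1_def .
  have N: "0 \<le> N" using C2_bounded_nonneg[OF f x] .
  note f' = f[unfolded C2_bounded_def, rule_format]
  define T1 where "T1 = f c - f x - h1 *\<^sub>R pd 1 f x"
  define T2 where "T2 = f y - f c - h2 *\<^sub>R pd 2 f c"
  define T3 where "T3 = h2 *\<^sub>R (pd 2 f c - pd 2 f x)"
  have "norm T1 \<le> N * h1\<^sup>2"
    unfolding T1_def c_def using c f' by (intro pd_taylor_bound[OF convex_ball x]) (auto simp: c_def)
  moreover have "norm T2 \<le> N * h2\<^sup>2"
    unfolding T2_def yc_eq using f' by (intro pd_taylor_bound[OF convex_ball c yc]) auto
  moreover have "norm (pd 2 f c - pd 2 f x) \<le> N * \<bar>h1\<bar>"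
    unfolding c_def using c f' by (intro pd_increment_bound[OF convex_ball x]) (auto simp: c_def)
  then have "\<bar>h2\<bar> * norm (pd 2 f c - pd 2 f x) \<le> \<bar>h2\<bar> * (N * \<bar>h1\<bar>)"
    by (rule mult_left_mono) simp
  then have "norm T3 \<le> N * (\<bar>h1\<bar> * \<bar>h2\<bar>)"
    by (simp add: T3_def mult_ac)
  moreover have "norm (T1 + T2 + T3) \<le> norm T1 + norm T2 + norm T3"
    using norm_triangle_ineq[of "T1 + T2" T3] norm_triangle_ineq[of T1 T2] by linarith
  moreover have h: "\<bar>h1\<bar> \<le> norm (y - x)" "\<bar>h2\<bar> \<le> norm (y - x)"
    by (simp_all only: h1_def h2_def component_le_norm_cart)
  then have "N * h1\<^sup>2 \<le> N * (norm (y - x))\<^sup>2" "N * h2\<^sup>2 \<le> N * (norm (y - x))\<^sup>2"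
    "N * (\<bar>h1\<bar> * \<bar>h2\<bar>) \<le> N * (norm (y - x))\<^sup>2"
    using N by (auto intro!: mult_left_mono simp: abs_le_square_iff[symmetric])
      (simp add: power2_eq_square mult_mono)
  moreover have "f y - f x - dd (\<lambda>_. y - x) f x = T1 + T2 + T3"
    by (simp add: dd_def sum_2 T1_def T2_def T3_def h1_def h2_def algebra_simps)
  ultimately show ?thesis by (simp only:)
qed

section \<open>Directional derivatives and Lie brackets\<close>

lemma norm_dd_le:
  assumes "norm (g z) \<le> G" "\<And>i. norm (pd i f z) \<le> P"
  shows "norm (dd g f z) \<le> 2 * G * P"
proof -
  have "norm (dd g f z) \<le> (\<Sum>i\<in>UNIV. \<bar>g z $ i\<bar> * norm (pd i f z))"
    unfolding dd_def by (rule order_trans[OF norm_sum]) simp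
  also have "\<dots> \<le> (\<Sum>i\<in>(UNIV::2 set). G * P)"
  proof (intro sum_mono mult_mono)
    fix i :: 2
    show "\<bar>g z $ i\<bar> \<le> G" using assms(1) component_le_norm_cart[of "g z" i] by linarith
    show "0 \<le> G" using assms(1) norm_ge_zero order_trans by blast
  qed (use assms in auto)
  finally show ?thesis by simp
qed

lemma norm_dd_diff_le:
  assumes g: "norm (g y - g x) \<le> Lg" "norm (g x) \<le> G"
    and f: "\<And>i. norm (pd i f y - pd i f x) \<le> Lf" "\<And>i. norm (pd i f y) \<le> P"
  shows "norm (dd g f y - dd g f x) \<le> 2 * (Lg * P + G * Lf)"
proof -
  have "dd g f y - dd g f x =
      (\<Sum>i\<in>UNIV. (g y $ i - g x $ i) *\<^sub>R pd i f y + g x $ i *\<^sub>R (pd i f y - pd i f x))"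
    unfolding dd_def sum_subtractf[symmetric] by (rule sum.cong) (simp_all add: algebra_simps)
  also have "norm \<dots> \<le> (\<Sum>i\<in>(UNIV::2 set). Lg * P + G * Lf)"
  proof (rule order_trans[OF norm_sum sum_mono])
    fix i :: 2
    have "0 \<le> Lg" "0 \<le> G" using g norm_ge_zero order_trans by blast+
    then have "\<bar>g y $ i - g x $ i\<bar> * norm (pd i f y) \<le> Lg * P"
      "\<bar>g x $ i\<bar> * norm (pd i f y - pd i f x) \<le> G * Lf"
      using g f component_le_norm_cart[of "g y - g x" i] component_le_norm_cart[of "g x" i]
      by (auto intro!: mult_mono)
    then show "norm ((g y $ i - g x $ i) *\<^sub>R pd i f y + g x $ i *\<^sub>R (pd i f y - pd i f x)) \<le> Lg * P + G * Lf"
      using norm_triangle_ineq[of "(g y $ i - g x $ i) *\<^sub>R pd i f y" "g x $ i *\<^sub>R (pd i f y - pd i f x)"]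
      by simp
  qed
  finally show ?thesis by simp
qed

lemma dd_const_combination:
  "dd (\<lambda>_. p *\<^sub>R u + q *\<^sub>R v) f z = p *\<^sub>R dd (\<lambda>_. u) f z + q *\<^sub>R dd (\<lambda>_. v) f z"
  by (simp add: dd_def scaleR_sum_right sum.distrib algebra_simps)

lemma lie_dd: "lie b \<sigma> z = dd \<sigma> b z - dd b \<sigma> z"
  by (simp add: lie_def)

lemma C2_bounded_lie:
  assumes \<sigma>: "C2_bounded (ball x r) \<sigma> N" and b: "C2_bounded (ball x r) b N"
    and y: "norm (y - x) < r"
  shows "norm (lie b \<sigma> x) \<le> 4 * N\<^sup>2"
    and "norm (lie b \<sigma> y - lie b \<sigma> x) \<le> 16 * N\<^sup>2 * norm (y - x)"
proof -
  note x = ball_mem_of_norm_diff_less(1)[OF y] and y' = ball_mem_of_norm_diff_less(2)[OF y]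
  have bnd: "norm (f z) \<le> N" "norm (pd i f z) \<le> N"
    if "f = \<sigma> \<or> f = b" "z \<in> ball x r" for f z i
    using that \<sigma> b exhaust_2[of i] unfolding C2_bounded_def by auto
  have lip: "norm (f y - f x) \<le> 2 * N * norm (y - x)" "norm (pd i f y - pd i f x) \<le> 2 * N * norm (y - x)"
    if "f = \<sigma> \<or> f = b" for f i
    using that C2_bounded_lipschitz[OF \<sigma> y] C2_bounded_lipschitz[OF b y] exhaust_2[of i] by auto
  have "norm (dd \<sigma> b x) \<le> 2 * N * N" "norm (dd b \<sigma> x) \<le> 2 * N * N"
    using bnd x by (auto intro!: norm_dd_le)
  then show "norm (lie b \<sigma> x) \<le> 4 * N\<^sup>2"
    unfolding lie_dd using norm_triangle_ineq4[of "dd \<sigma> b x" "dd b \<sigma> x"]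
    by (simp add: power2_eq_square)
  have "norm (dd g f y - dd g f x) \<le> 8 * N\<^sup>2 * norm (y - x)"
    if "g = \<sigma> \<or> g = b" "f = \<sigma> \<or> f = b" for g f
    using norm_dd_diff_le[OF lip(1)[OF that(1)] bnd(1)[OF that(1) x] lip(2)[OF that(2)] bnd(2)[OF that(2) y']]
    by (simp add: power2_eq_square algebra_simps)
  from this[of \<sigma> b] this[of b \<sigma>]
  show "norm (lie b \<sigma> y - lie b \<sigma> x) \<le> 16 * N\<^sup>2 * norm (y - x)"
    unfolding lie_dd
    using norm_triangle_ineq4[of "dd \<sigma> b y - dd \<sigma> b x" "dd b \<sigma> y - dd b \<sigma> x"]
    by (simp add: algebra_simps)
qed

lemma C2_bounded_expansion:
  assumes \<sigma>: "C2_bounded (ball x r) \<sigma> N" and y: "norm (y - x) < r"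
    and \<kappa>: "dd \<sigma> \<sigma> x = k *\<^sub>R \<sigma> x" and h: "y - x = p *\<^sub>R \<sigma> x + q *\<^sub>R w"
  shows "norm (\<sigma> y - (1 + p * k) *\<^sub>R \<sigma> x) \<le> 3 * N * (norm (y - x))\<^sup>2 + 2 * N * \<bar>q\<bar> * norm w"
proof -
  have "norm (pd i \<sigma> x) \<le> N" for i
    using \<sigma> exhaust_2[of i] ball_mem_of_norm_diff_less[OF y] unfolding C2_bounded_def by auto
  then have dw: "norm (dd (\<lambda>_. w) \<sigma> x) \<le> 2 * norm w * N"
    by (intro norm_dd_le) auto
  have "dd (\<lambda>_. y - x) \<sigma> x = (p * k) *\<^sub>R \<sigma> x + q *\<^sub>R dd (\<lambda>_. w) \<sigma> x"
    using \<kappa> unfolding h dd_const_combination by (simp add: dd_def)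
  then have "\<sigma> y - (1 + p * k) *\<^sub>R \<sigma> x = (\<sigma> y - \<sigma> x - dd (\<lambda>_. y - x) \<sigma> x) + q *\<^sub>R dd (\<lambda>_. w) \<sigma> x"
    by (simp add: algebra_simps)
  then have "norm (\<sigma> y - (1 + p * k) *\<^sub>R \<sigma> x)
      \<le> norm (\<sigma> y - \<sigma> x - dd (\<lambda>_. y - x) \<sigma> x) + \<bar>q\<bar> * norm (dd (\<lambda>_. w) \<sigma> x)"
    by (metis norm_scaleR norm_triangle_ineq real_norm_def)
  also have "\<dots> \<le> 3 * N * (norm (y - x))\<^sup>2 + \<bar>q\<bar> * (2 * norm w * N)"
    using C2_bounded_taylor[OF \<sigma> y] dw by (intro add_mono mult_left_mono) auto
  finally show ?thesis by (simp add: mult_ac)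
qed

lemma pdm_low_order:
  "pdm 0 0 f = f" "pdm 1 0 f = pd 1 f" "pdm 0 1 f = pd 2 f"
  "pdm 2 0 f = pd 1 (pd 1 f)" "pdm 1 1 f = pd 1 (pd 2 f)" "pdm 0 2 f = pd 2 (pd 2 f)"
  by (simp_all add: pdm_def pds_def numeral_2_eq_2)

lemma norm_pdm_le_nfun:
  assumes "j + k \<le> 3"
  shows "norm (pdm j k \<sigma> z) \<le> nfun \<sigma> b z" "norm (pdm j k b z) \<le> nfun \<sigma> b z"
proof -
  define T where "T m i = norm (pdm i (m - i) b z) + norm (pdm i (m - i) \<sigma> z)" for m i
  have "T (j + k) j \<le> (\<Sum>i\<in>{0..j + k}. T (j + k) i)"
    by (intro member_le_sum) (auto simp: T_def)
  also have "\<dots> \<le> (\<Sum>m\<in>{0..3}. \<Sum>i\<in>{0..m}. T m i)"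
    using assms by (intro member_le_sum[where f="\<lambda>m. \<Sum>i\<in>{0..m}. T m i"] sum_nonneg) (auto simp: T_def)
  finally have "T (j + k) j \<le> nfun \<sigma> b z" unfolding nfun_def T_def .
  then show "norm (pdm j k \<sigma> z) \<le> nfun \<sigma> b z" "norm (pdm j k b z) \<le> nfun \<sigma> b z"
    unfolding T_def by (smt (verit) norm_ge_zero add_diff_cancel_left')+
qed

lemma C3_differentiable:
  assumes "C3 f"
  shows "f differentiable (at z)" "pd 1 f differentiable (at z)" "pd 2 f differentiable (at z)"
proof -
  have "pds is f differentiable (at z)" if "length is \<le> 2" for "is"
    using assms that unfolding C3_def by blast
  from this[of "[]"] this[of "[1]"] this[of "[2]"]
  show "f differentiable (at z)" "pd 1 f differentiable (at z)" "pd 2 f differentiable (at z)"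
    by (simp_all add: pds_def)
qed

lemma local_hyp_C2_bounded:
  assumes "local_hyp \<sigma> b x \<Lambda> N"
  shows "C2_bounded (ball x 1) \<sigma> N" "C2_bounded (ball x 1) b N"
proof -
  have n: "nfun \<sigma> b z \<le> N" if "z \<in> ball x 1" for z
    using assms that unfolding local_hyp_def by (auto simp: dist_commute)
  have "norm (pdm j k f z) \<le> N" if "f = \<sigma> \<or> f = b" "z \<in> ball x 1" "j + k \<le> 3" for f z j k
    using norm_pdm_le_nfun[OF that(3), where \<sigma>=\<sigma> and b=b and z=z] n[OF that(2)] that(1) by auto
  from this[of _ _ 0 0] this[of _ _ 1 0] this[of _ _ 0 1] this[of _ _ 2 0] this[of _ _ 1 1] this[of _ _ 0 2]
  have "norm (f z) \<le> N \<and> norm (pd 1 f z) \<le> N \<and> norm (pd 2 f z) \<le> N \<and>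
      norm (pd 1 (pd 1 f) z) \<le> N \<and> norm (pd 1 (pd 2 f) z) \<le> N \<and> norm (pd 2 (pd 2 f) z) \<le> N"
    if "f = \<sigma> \<or> f = b" "z \<in> ball x 1" for f z
    using that unfolding pdm_low_order by simp
  moreover have "C3 \<sigma>" "C3 b" using assms unfolding local_hyp_def by auto
  ultimately show "C2_bounded (ball x 1) \<sigma> N" "C2_bounded (ball x 1) b N"
    unfolding C2_bounded_def using C3_differentiable by blast+
qed

section \<open>Matrices with two given columns\<close>

lemma cols_mult_vec: "cols u v *v z = z$1 *\<^sub>R u + z$2 *\<^sub>R v"
  by (simp add: vec_eq_iff matrix_vector_mult_def cols_def sum_2 forall_2 mult.commute)

lemma det_cols: "det (cols u v) = u$1 * v$2 - v$1 * u$2"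
  by (simp add: det_2 cols_def)

lemma det_cols_scaleR: "det (cols (a *\<^sub>R u) (c *\<^sub>R w)) = a * c * det (cols u w)"
  by (simp add: det_cols algebra_simps)

lemma abs_det_cols_le: "\<bar>det (cols u v)\<bar> \<le> norm u * norm v"
proof -
  have "(det (cols u v))\<^sup>2 + (u$1 * v$1 + u$2 * v$2)\<^sup>2 = (norm u * norm v)\<^sup>2"
    by (simp add: det_cols norm_vec_def L2_set_def sum_2 power_mult_distrib power2_eq_square algebra_simps)
  then have "(det (cols u v))\<^sup>2 \<le> (norm u * norm v)\<^sup>2"
    by (metis le_add_same_cancel1 zero_le_power2)
  then show ?thesis by (simp add: abs_le_square_iff[symmetric])
qed

lemma cramer_cols:
  assumes "det (cols u w) \<noteq> 0"
  shows "v = (det (cols v w) / det (cols u w)) *\<^sub>R u + (det (cols u v) / det (cols u w)) *\<^sub>R w"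
proof -
  have eq: "det (cols u w) *\<^sub>R v = det (cols v w) *\<^sub>R u + det (cols u v) *\<^sub>R w"
    unfolding vec_eq_iff forall_2 by (simp add: det_cols) (simp add: algebra_simps)
  have "v = (1 / det (cols u w)) *\<^sub>R (det (cols u w) *\<^sub>R v)"
    using assms by simp
  then show ?thesis
    unfolding eq by (simp add: scaleR_add_right)
qed

lemma cols_coordinates_le:
  assumes d: "0 < d" "d \<le> \<bar>det (cols u w)\<bar>"
    and "norm u \<le> U" "norm w \<le> W" "norm v \<le> V"
  obtains \<alpha> \<beta> where "v = \<alpha> *\<^sub>R u + \<beta> *\<^sub>R w" "\<bar>\<alpha>\<bar> \<le> V * W / d" "\<bar>\<beta>\<bar> \<le> U * V / d"
proof -
  have "0 \<le> U" "0 \<le> V" using assms(3,5) norm_ge_zero order_trans by blast+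
  then have "\<bar>det (cols v w)\<bar> \<le> V * W" "\<bar>det (cols u v)\<bar> \<le> U * V"
    using abs_det_cols_le[of v w] abs_det_cols_le[of u v] assms(3-5)
    by (meson mult_mono norm_ge_zero order_trans)+
  then have "\<bar>det (cols v w) / det (cols u w)\<bar> \<le> V * W / d"
    "\<bar>det (cols u v) / det (cols u w)\<bar> \<le> U * V / d"
    unfolding abs_divide using d by (auto intro!: frac_le)
  moreover have "det (cols u w) \<noteq> 0" using d by linarith
  ultimately show thesis using that cramer_cols by blast
qed

lemma matrix_inv_inverse:
  fixes A :: "real^'n^'n"
  assumes "invertible A"
  shows "A ** matrix_inv A = mat 1" "matrix_inv A ** A = mat 1"
  using someI_ex[OF assms[unfolded invertible_def]] unfolding matrix_inv_def by auto

lemma anorm_eq_norm: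
  fixes A :: "real^2^2"
  assumes "invertible A" "A *v z = \<xi>"
  shows "anorm A \<xi> = norm z"
  using matrix_inv_inverse(2)[OF assms(1)] assms(2)
  by (metis anorm_def matrix_vector_mul_assoc matrix_vector_mul_lid)

lemma anorm_obtain:
  fixes A :: "real^2^2"
  assumes "invertible A"
  obtains z where "A *v z = \<xi>" "anorm A \<xi> = norm z"
  using matrix_inv_inverse(1)[OF assms] unfolding anorm_def
  by (metis matrix_vector_mul_assoc matrix_vector_mul_lid)

lemma anorm_cols_bound_coordinates:
  assumes "det (cols u w) \<noteq> 0" "anorm (cols u w) v \<le> \<rho>"
  obtains a c where "v = a *\<^sub>R u + c *\<^sub>R w" "\<bar>a\<bar> \<le> \<rho>" "\<bar>c\<bar> \<le> \<rho>"
proof -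
  obtain z where "cols u w *v z = v" "anorm (cols u w) v = norm z"
    using anorm_obtain assms(1) invertible_det_nz by blast
  then show thesis
    using that[of "z$1" "z$2"] assms(2) component_le_norm_cart[of z] cols_mult_vec
    by (metis order_trans)
qed

lemma det_ge_of_min_eig_ge:
  fixes P :: "real^2^2"
  assumes sym: "P$1$2 = P$2$1" and \<Lambda>: "\<Lambda> \<le> min_eig P" "0 \<le> \<Lambda>"
  shows "\<Lambda>\<^sup>2 \<le> det P"
proof -
  define p q r where "p = P$1$1" and "q = P$1$2" and "r = P$2$2"
  define D where "D = (p - r)\<^sup>2 + 4 * q\<^sup>2"
  define t1 t2 where "t1 = (p + r - sqrt D) / 2" and "t2 = (p + r + sqrt D) / 2"
  have sqrt_D: "(sqrt D)\<^sup>2 = D" by (simp add: D_def)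
  have char: "det (P - t *\<^sub>R mat 1) = (t - t1) * (t - t2)" for t
  proof -
    have "det (P - t *\<^sub>R mat 1) = (p - t) * (r - t) - q\<^sup>2"
      by (simp add: det_2 mat_def p_def q_def r_def sym power2_eq_square)
    also have "\<dots> = t\<^sup>2 - (p + r) * t + ((p + r)\<^sup>2 - (sqrt D)\<^sup>2) / 4"
      unfolding sqrt_D by (simp add: D_def power2_eq_square field_simps)
    also have "\<dots> = (t - t1) * (t - t2)"
      by (simp add: t1_def t2_def power2_eq_square field_simps)
    finally show ?thesis .
  qed
  then have "{t. det (P - t *\<^sub>R mat 1) = 0} = {t1, t2}" by auto
  then have "\<Lambda> \<le> t1" "\<Lambda> \<le> t2" using \<Lambda>(1) by (auto simp: min_eig_def)
  then have "\<Lambda> * \<Lambda> \<le> t1 * t2" using \<Lambda>(2) by (intro mult_mono) auto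
  moreover have "det P = t1 * t2" using char[of 0] by simp
  ultimately show ?thesis by (simp add: power2_eq_square)
qed

lemma abs_det_Amat_ge:
  assumes "\<Lambda> \<le> lam \<sigma> b z" "0 \<le> \<Lambda>"
  shows "\<Lambda> \<le> \<bar>det (Amat \<sigma> b z)\<bar>"
proof -
  let ?A = "Amat \<sigma> b z"
  have "(?A ** transpose ?A)$1$2 = (?A ** transpose ?A)$2$1"
    by (simp add: matrix_matrix_mult_def transpose_def mult.commute)
  then have "\<Lambda>\<^sup>2 \<le> det (?A ** transpose ?A)"
    using det_ge_of_min_eig_ge assms unfolding lam_def by blast
  then have "\<Lambda>\<^sup>2 \<le> (det ?A)\<^sup>2" by (simp add: det_mul power2_eq_square)
  then show ?thesis using assms(2) by (simp add: abs_le_square_iff[symmetric])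
qed

lemma anorm_cols_comparable:
  fixes u w u' w' \<xi> :: R2
  assumes det: "det (cols u w) \<noteq> 0" "det (cols u' w') \<noteq> 0"
    and u': "u' = (1 + f11) *\<^sub>R u + f21 *\<^sub>R w" and w': "w' = f12 *\<^sub>R u + (1 + f22) *\<^sub>R w"
    and small: "\<bar>f11\<bar> + \<bar>f12\<bar> + \<bar>f21\<bar> + \<bar>f22\<bar> \<le> 1/2"
  shows "anorm (cols u w) \<xi> \<le> 2 * anorm (cols u' w') \<xi>"
    and "anorm (cols u' w') \<xi> \<le> 2 * anorm (cols u w) \<xi>"
proof -
  obtain \<zeta> where \<zeta>: "cols u' w' *v \<zeta> = \<xi>" "anorm (cols u' w') \<xi> = norm \<zeta>"
    using anorm_obtain det(2) invertible_det_nz by blast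
  define \<eta> :: R2 where "\<eta> = vector [(1 + f11) * \<zeta>$1 + f12 * \<zeta>$2, f21 * \<zeta>$1 + (1 + f22) * \<zeta>$2]"
  have "cols u w *v \<eta> = \<xi>"
    using \<zeta>(1) by (simp add: \<eta>_def cols_mult_vec u' w' algebra_simps)
  then have \<eta>: "anorm (cols u w) \<xi> = norm \<eta>"
    using anorm_eq_norm det(1) invertible_det_nz by blast
  have "norm (\<eta> - \<zeta>) \<le> \<bar>f11 * \<zeta>$1 + f12 * \<zeta>$2\<bar> + \<bar>f21 * \<zeta>$1 + f22 * \<zeta>$2\<bar>"
    using norm_le_l1_cart[of "\<eta> - \<zeta>"] by (simp add: sum_2 \<eta>_def algebra_simps)
  also have "\<dots> \<le> (\<bar>f11\<bar> + \<bar>f12\<bar> + \<bar>f21\<bar> + \<bar>f22\<bar>) * norm \<zeta>"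
    using component_le_norm_cart[of \<zeta> 1] component_le_norm_cart[of \<zeta> 2]
      abs_triangle_ineq[of "f11 * \<zeta>$1" "f12 * \<zeta>$2"] abs_triangle_ineq[of "f21 * \<zeta>$1" "f22 * \<zeta>$2"]
      mult_left_mono[of "\<bar>\<zeta>$1\<bar>" "norm \<zeta>" "\<bar>f11\<bar>"] mult_left_mono[of "\<bar>\<zeta>$2\<bar>" "norm \<zeta>" "\<bar>f12\<bar>"]
      mult_left_mono[of "\<bar>\<zeta>$1\<bar>" "norm \<zeta>" "\<bar>f21\<bar>"] mult_left_mono[of "\<bar>\<zeta>$2\<bar>" "norm \<zeta>" "\<bar>f22\<bar>"]
    by (simp add: abs_mult algebra_simps)
  also have "\<dots> \<le> norm \<zeta> / 2"
    using mult_right_mono[OF small norm_ge_zero[of \<zeta>]] by simp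
  finally have "norm (\<eta> - \<zeta>) \<le> norm \<zeta> / 2" .
  then show "anorm (cols u w) \<xi> \<le> 2 * anorm (cols u' w') \<xi>"
    and "anorm (cols u' w') \<xi> \<le> 2 * anorm (cols u w) \<xi>"
    unfolding \<eta> \<zeta>(2) using norm_triangle_ineq2[of \<eta> \<zeta>] norm_triangle_ineq3[of \<eta> \<zeta>] by linarith+
qed

lemma scaled_cols_change_of_basis:
  fixes u w u' w' :: R2
  assumes s: "0 < s" "s \<le> 1" and det: "0 < d" "d \<le> \<bar>det (cols u w)\<bar>"
    and U: "norm u \<le> U" and W: "norm w \<le> W"
    and u': "norm (u' - (1 - e) *\<^sub>R u) \<le> \<eta> * s\<^sup>2" and w': "norm (w' - w) \<le> \<eta> * s"
  obtains f11 f12 f21 f22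
  where "s *\<^sub>R u' = (1 + f11) *\<^sub>R (s *\<^sub>R u) + f21 *\<^sub>R (s^3 *\<^sub>R w)"
    and "s^3 *\<^sub>R w' = f12 *\<^sub>R (s *\<^sub>R u) + (1 + f22) *\<^sub>R (s^3 *\<^sub>R w)"
    and "\<bar>f11\<bar> + \<bar>f12\<bar> + \<bar>f21\<bar> + \<bar>f22\<bar> \<le> \<bar>e\<bar> + 2 * (U + W) * \<eta> / d"
proof -
  have "0 \<le> \<eta> * s" using w' norm_ge_zero order_trans by blast
  then have "0 \<le> \<eta>" using s by (simp add: zero_le_mult_iff)
  moreover have "0 \<le> U" "0 \<le> W" using U W norm_ge_zero order_trans by blast+
  ultimately have A: "0 \<le> \<eta> * W / d" and B: "0 \<le> U * \<eta> / d" using det by simp_all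
  obtain \<alpha>R \<beta>R where R: "u' - (1 - e) *\<^sub>R u = \<alpha>R *\<^sub>R u + \<beta>R *\<^sub>R w"
    and \<alpha>R: "\<bar>\<alpha>R\<bar> \<le> \<eta> * s\<^sup>2 * W / d" and \<beta>R: "\<bar>\<beta>R\<bar> \<le> U * (\<eta> * s\<^sup>2) / d"
    by (rule cols_coordinates_le[OF det U W u'])
  obtain \<alpha>V \<beta>V where V: "w' - w = \<alpha>V *\<^sub>R u + \<beta>V *\<^sub>R w"
    and \<alpha>V: "\<bar>\<alpha>V\<bar> \<le> \<eta> * s * W / d" and \<beta>V: "\<bar>\<beta>V\<bar> \<le> U * (\<eta> * s) / d"
    by (rule cols_coordinates_le[OF det U W w'])
  have s2: "s\<^sup>2 \<le> 1" "0 < s\<^sup>2" "s^3 \<le> 1" using s by (simp_all add: power_le_one)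
  show thesis
  proof (rule that[of "\<alpha>R - e" "\<beta>R / s\<^sup>2" "s\<^sup>2 * \<alpha>V" \<beta>V])
    have "u' = (1 + (\<alpha>R - e)) *\<^sub>R u + \<beta>R *\<^sub>R w"
      using R by (simp add: algebra_simps)
    moreover have "\<beta>R / s\<^sup>2 * s^3 = \<beta>R * s"
      using s by (simp add: power2_eq_square power3_eq_cube)
    ultimately show "s *\<^sub>R u' = (1 + (\<alpha>R - e)) *\<^sub>R (s *\<^sub>R u) + (\<beta>R / s\<^sup>2) *\<^sub>R (s^3 *\<^sub>R w)"
      by (simp add: scaleR_add_right mult.commute)
    show "s^3 *\<^sub>R w' = (s\<^sup>2 * \<alpha>V) *\<^sub>R (s *\<^sub>R u) + (1 + \<beta>V) *\<^sub>R (s^3 *\<^sub>R w)"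
      using V by (simp add: power2_eq_square power3_eq_cube algebra_simps eq_diff_eq)
    have "\<bar>\<alpha>R\<bar> \<le> s\<^sup>2 * (\<eta> * W / d)" "\<bar>s\<^sup>2 * \<alpha>V\<bar> \<le> s^3 * (\<eta> * W / d)"
      using \<alpha>R mult_left_mono[OF \<alpha>V, of "s\<^sup>2"] by (simp_all add: abs_mult power2_eq_square power3_eq_cube mult_ac)
    then have "\<bar>\<alpha>R\<bar> \<le> \<eta> * W / d" "\<bar>s\<^sup>2 * \<alpha>V\<bar> \<le> \<eta> * W / d"
      using mult_left_le_one_le[OF A _ s2(1)] mult_left_le_one_le[OF A _ s2(3)] s by simp_all
    moreover have "\<bar>\<beta>R / s\<^sup>2\<bar> \<le> U * \<eta> / d"
      using \<beta>R s2(2) by (simp add: abs_divide divide_le_eq mult_ac)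
    moreover have "\<bar>\<beta>V\<bar> \<le> s * (U * \<eta> / d)" using \<beta>V by (simp add: mult_ac)
    then have "\<bar>\<beta>V\<bar> \<le> U * \<eta> / d" using mult_left_le_one_le[OF B _ s(2)] s by simp
    moreover have "2 * (\<eta> * W / d) + 2 * (U * \<eta> / d) = 2 * (U + W) * \<eta> / d"
      using det(1) by (simp add: field_simps)
    ultimately show "\<bar>\<alpha>R - e\<bar> + \<bar>s\<^sup>2 * \<alpha>V\<bar> + \<bar>\<beta>R / s\<^sup>2\<bar> + \<bar>\<beta>V\<bar> \<le> \<bar>e\<bar> + 2 * (U + W) * \<eta> / d"
      by linarith
  qed
qed

lemma anorm_scaled_cols_comparable:
  fixes u w u' w' \<xi> :: R2
  assumes s: "0 < s" "s \<le> 1"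
    and det: "0 < d" "d \<le> \<bar>det (cols u w)\<bar>" "det (cols u' w') \<noteq> 0"
    and U: "norm u \<le> U" and W: "norm w \<le> W"
    and u': "norm (u' - (1 - e) *\<^sub>R u) \<le> \<eta> * s\<^sup>2" and w': "norm (w' - w) \<le> \<eta> * s"
    and small: "\<bar>e\<bar> + 2 * (U + W) * \<eta> / d \<le> 1/2"
  shows "anorm (cols (s *\<^sub>R u) (s^3 *\<^sub>R w)) \<xi> \<le> 2 * anorm (cols (s *\<^sub>R u') (s^3 *\<^sub>R w')) \<xi>"
    and "anorm (cols (s *\<^sub>R u') (s^3 *\<^sub>R w')) \<xi> \<le> 2 * anorm (cols (s *\<^sub>R u) (s^3 *\<^sub>R w)) \<xi>"
proof -
  obtain f11 f12 f21 f22
    where "s *\<^sub>R u' = (1 + f11) *\<^sub>R (s *\<^sub>R u) + f21 *\<^sub>R (s^3 *\<^sub>R w)"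
      and "s^3 *\<^sub>R w' = f12 *\<^sub>R (s *\<^sub>R u) + (1 + f22) *\<^sub>R (s^3 *\<^sub>R w)"
      and F: "\<bar>f11\<bar> + \<bar>f12\<bar> + \<bar>f21\<bar> + \<bar>f22\<bar> \<le> \<bar>e\<bar> + 2 * (U + W) * \<eta> / d"
    by (rule scaled_cols_change_of_basis[OF s det(1,2) U W u' w'])
  moreover from F small have "\<bar>f11\<bar> + \<bar>f12\<bar> + \<bar>f21\<bar> + \<bar>f22\<bar> \<le> 1/2" by linarith
  moreover have "det (cols (s *\<^sub>R u) (s^3 *\<^sub>R w)) \<noteq> 0" "det (cols (s *\<^sub>R u') (s^3 *\<^sub>R w')) \<noteq> 0"
    using det s by (auto simp: det_cols_scaleR)
  ultimately show "anorm (cols (s *\<^sub>R u) (s^3 *\<^sub>R w)) \<xi> \<le> 2 * anorm (cols (s *\<^sub>R u') (s^3 *\<^sub>R w')) \<xi>"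
    and "anorm (cols (s *\<^sub>R u') (s^3 *\<^sub>R w')) \<xi> \<le> 2 * anorm (cols (s *\<^sub>R u) (s^3 *\<^sub>R w)) \<xi>"
    using anorm_cols_comparable by blast+
qed

section \<open>Comparison of A_delta at nearby points\<close>

lemma powr_three_halves: "0 < \<delta> \<Longrightarrow> \<delta> powr (3/2) = sqrt \<delta> ^ 3"
proof -
  assume "0 < \<delta>"
  then have "\<delta> powr (3/2) = \<delta> powr 1 * \<delta> powr (1/2)"
    using powr_add[of \<delta> 1 "1/2"] by simp
  also have "\<dots> = sqrt \<delta> ^ 3"
    using \<open>0 < \<delta>\<close> by (simp add: powr_half_sqrt power3_eq_cube)
  finally show ?thesis .
qed

lemma norm_scaled_combination_le:
  assumes M1: "1 \<le> M" and s: "0 < s" "s \<le> 1"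
    and u: "norm u \<le> M" and w: "norm w \<le> 4 * M\<^sup>2" and ac: "\<bar>a\<bar> \<le> \<rho>" "\<bar>c\<bar> \<le> \<rho>"
  shows "norm ((a * s) *\<^sub>R u + (c * s^3) *\<^sub>R w) \<le> 5 * M\<^sup>2 * \<rho> * s"
proof -
  have "norm ((a * s) *\<^sub>R u + (c * s^3) *\<^sub>R w) \<le> (\<bar>a\<bar> * s) * norm u + (\<bar>c\<bar> * s^3) * norm w"
    using norm_triangle_ineq[of "(a * s) *\<^sub>R u" "(c * s^3) *\<^sub>R w"] s by (simp add: abs_mult)
  also have "\<dots> \<le> (\<rho> * s) * M\<^sup>2 + (\<rho> * s) * (4 * M\<^sup>2)"
  proof (rule add_mono; rule mult_mono)
    show "\<bar>a\<bar> * s \<le> \<rho> * s" using ac(1) s by (simp add: mult_right_mono)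
    have "s^3 \<le> s" using s by (simp add: power_le_one power3_eq_cube mult_le_one)
    then show "\<bar>c\<bar> * s^3 \<le> \<rho> * s"
      using mult_mono[OF ac(2), of "s^3" s] ac(2) s by simp
    show "norm u \<le> M\<^sup>2" using u M1 power_increasing[of 1 2 M] by simp
  qed (use w ac s in \<open>auto intro: order_trans[OF abs_ge_zero]\<close>)
  finally show ?thesis by (simp add: algebra_simps)
qed

lemma C2_bounded_expansion_small:
  assumes \<sigma>: "C2_bounded (ball x 1) \<sigma> N" and N: "0 \<le> N" "N \<le> M" and M1: "1 \<le> M"
    and \<rho>: "0 < \<rho>" "\<rho> \<le> 1" and s: "0 < s" "s \<le> 1" and w: "norm w \<le> 4 * M\<^sup>2"
    and \<kappa>: "dd \<sigma> \<sigma> x = k *\<^sub>R \<sigma> x" and h: "y - x = (- (a * s)) *\<^sub>R \<sigma> x + (- (c * s^3)) *\<^sub>R w"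
    and c: "\<bar>c\<bar> \<le> \<rho>" and y: "norm (y - x) < 1" "norm (y - x) \<le> 5 * M\<^sup>2 * \<rho> * s"
  shows "norm (\<sigma> y - (1 - a * s * k) *\<^sub>R \<sigma> x) \<le> (83 * M^5 * \<rho>) * s\<^sup>2"
proof -
  have "norm (\<sigma> y - (1 + - (a * s) * k) *\<^sub>R \<sigma> x)
      \<le> 3 * N * (norm (y - x))\<^sup>2 + 2 * N * \<bar>- (c * s^3)\<bar> * norm w"
    using C2_bounded_expansion[OF \<sigma> y(1) \<kappa> h] .
  also have "\<dots> \<le> 75 * M^5 * \<rho> * s\<^sup>2 + 8 * M^5 * \<rho> * s\<^sup>2"
  proof (rule add_mono)
    have "(norm (y - x))\<^sup>2 \<le> (5 * M\<^sup>2 * \<rho> * s)\<^sup>2" using y(2) by (intro power_mono) auto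
    also have "\<dots> = 25 * M^4 * (\<rho> * \<rho>) * s\<^sup>2" by algebra
    also have "\<dots> \<le> 25 * M^4 * \<rho> * s\<^sup>2"
      using \<rho> M1 by (intro mult_right_mono mult_left_mono) (auto simp: mult_left_le_one_le)
    finally have "3 * N * (norm (y - x))\<^sup>2 \<le> 3 * M * (25 * M^4 * \<rho> * s\<^sup>2)"
      using N by (intro mult_mono) auto
    then show "3 * N * (norm (y - x))\<^sup>2 \<le> 75 * M^5 * \<rho> * s\<^sup>2"
      by (simp add: power_numeral_reduce mult_ac)
    have "\<bar>- (c * s^3)\<bar> \<le> \<rho> * s\<^sup>2"
      using mult_mono[OF c power_decreasing[of 2 3 s]] s \<rho> by (simp add: abs_mult)
    then have "2 * N * \<bar>- (c * s^3)\<bar> * norm w \<le> 2 * M * (\<rho> * s\<^sup>2) * (4 * M\<^sup>2)"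
      using N w \<rho> by (intro mult_mono) auto
    also have "\<dots> \<le> 8 * M^5 * \<rho> * s\<^sup>2"
      using power_increasing[of 3 5 M] M1 \<rho> s
      by (simp add: power2_eq_square power3_eq_cube mult_ac mult_left_mono)
    finally show "2 * N * \<bar>- (c * s^3)\<bar> * norm w \<le> 8 * M^5 * \<rho> * s\<^sup>2" .
  qed
  finally show ?thesis by (simp add: algebra_simps)
qed

lemma C2_bounded_displacement:
  assumes \<sigma>: "C2_bounded (ball x 1) \<sigma> N" and b: "C2_bounded (ball x 1) b N"
    and N: "0 \<le> N" "N \<le> M" and M1: "1 \<le> M" and \<rho>: "0 < \<rho>" "M^8 * \<rho> = 1/3000"
    and nu: "norm (\<sigma> x) \<le> M" and nw: "norm (lie b \<sigma> x) \<le> 4 * M\<^sup>2"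
    and s: "0 < s" "s \<le> 1" and \<kappa>: "dd \<sigma> \<sigma> x = k *\<^sub>R \<sigma> x"
    and h: "y - x = (- (a * s)) *\<^sub>R \<sigma> x + (- (c * s^3)) *\<^sub>R lie b \<sigma> x"
    and ac: "\<bar>a\<bar> \<le> \<rho>" "\<bar>c\<bar> \<le> \<rho>"
  shows "norm (y - x) < 1"
    and "norm (\<sigma> y - (1 - a * s * k) *\<^sub>R \<sigma> x) \<le> (83 * M^5 * \<rho>) * s\<^sup>2"
    and "norm (lie b \<sigma> y - lie b \<sigma> x) \<le> (83 * M^5 * \<rho>) * s"
proof -
  have M8: "M\<^sup>2 \<le> M^8" "M^4 \<le> M^5" using M1 by (simp_all add: power_increasing)
  have "1 * \<rho> \<le> M^8 * \<rho>"
    using \<rho>(1) one_le_power[OF M1, of 8] by (intro mult_right_mono) auto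
  then have \<rho>1: "\<rho> \<le> 1" using \<rho>(2) by linarith
  have nh: "norm (y - x) \<le> 5 * M\<^sup>2 * \<rho> * s"
    using norm_scaled_combination_le[OF M1 s nu nw, of "- a" \<rho> "- c"] ac unfolding h by simp
  also have "\<dots> \<le> 5 * M^8 * \<rho> * 1"
    using M8 \<rho> s by (intro mult_mono) auto
  finally show y1: "norm (y - x) < 1" using \<rho>(2) by simp
  show "norm (\<sigma> y - (1 - a * s * k) *\<^sub>R \<sigma> x) \<le> (83 * M^5 * \<rho>) * s\<^sup>2"
    by (rule C2_bounded_expansion_small[OF \<sigma> N M1 \<rho>(1) \<rho>1 s nw \<kappa> h ac(2) y1 nh])
  have "norm (lie b \<sigma> y - lie b \<sigma> x) \<le> 16 * N\<^sup>2 * norm (y - x)"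
    using C2_bounded_lie(2)[OF \<sigma> b y1] .
  also have "\<dots> \<le> 16 * M\<^sup>2 * (5 * M\<^sup>2 * \<rho> * s)"
    using N nh by (intro mult_mono power_mono) auto
  also have "\<dots> = 80 * M^4 * \<rho> * s" by algebra
  also have "\<dots> \<le> (83 * M^5 * \<rho>) * s"
    using M8 M1 \<rho> s by (intro mult_right_mono mult_mono) auto
  finally show "norm (lie b \<sigma> y - lie b \<sigma> x) \<le> (83 * M^5 * \<rho>) * s" .
qed

lemma local_hyp_bounds:
  assumes H: "local_hyp \<sigma> b x \<Lambda> N"
  defines "M \<equiv> N / \<Lambda>"
  shows "0 < \<Lambda>" "N \<le> M" "1 / \<Lambda> \<le> M" "1 \<le> M"
    and "\<And>z. z \<in> ball x 1 \<Longrightarrow> \<Lambda> \<le> \<bar>det (cols (\<sigma> z) (lie b \<sigma> z))\<bar>"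
    and "norm (\<sigma> x) \<le> M" "norm (lie b \<sigma> x) \<le> 4 * M\<^sup>2"
    and "\<exists>k. dd \<sigma> \<sigma> x = k *\<^sub>R \<sigma> x \<and> \<bar>k\<bar> \<le> M"
proof -
  have \<Lambda>: "0 < \<Lambda>" "\<Lambda> \<le> 1" and N: "1 \<le> N"
    and lam: "\<And>z. z \<in> ball x 1 \<Longrightarrow> \<Lambda> \<le> lam \<sigma> b z"
    and \<kappa>: "\<exists>\<kappa>. dd \<sigma> \<sigma> x = \<kappa> *\<^sub>R \<sigma> x \<and> \<bar>\<kappa>\<bar> \<le> nfun \<sigma> b x" and "nfun \<sigma> b x \<le> N"
    using H unfolding local_hyp_def by (auto simp: dist_commute)
  show "0 < \<Lambda>" by (fact \<Lambda>(1))
  show NM: "N \<le> M" and "1 / \<Lambda> \<le> M" and "1 \<le> M"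
    using \<Lambda> N by (auto simp: M_def field_simps mult_left_le)
  then show "\<exists>k. dd \<sigma> \<sigma> x = k *\<^sub>R \<sigma> x \<and> \<bar>k\<bar> \<le> M"
    using \<kappa> \<open>nfun \<sigma> b x \<le> N\<close> by force
  show "\<Lambda> \<le> \<bar>det (cols (\<sigma> z) (lie b \<sigma> z))\<bar>" if "z \<in> ball x 1" for z
    using abs_det_Amat_ge[OF lam[OF that]] \<Lambda> by (simp add: Amat_def)
  note \<sigma>b = local_hyp_C2_bounded[OF H]
  have "x \<in> ball x 1" by simp
  then have "norm (\<sigma> x) \<le> N" using \<sigma>b(1) unfolding C2_bounded_def by blast
  then show "norm (\<sigma> x) \<le> M" using NM by linarith
  have "norm (lie b \<sigma> x) \<le> 4 * N\<^sup>2" using C2_bounded_lie(1)[OF \<sigma>b, of x] by simp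
  moreover have "N\<^sup>2 \<le> M\<^sup>2" using NM N by (intro power_mono) auto
  ultimately show "norm (lie b \<sigma> x) \<le> 4 * M\<^sup>2" by linarith
qed

lemma perturbation_size_le_half:
  fixes M \<Lambda> \<rho> s a k :: real
  assumes M1: "1 \<le> M" and \<Lambda>: "0 < \<Lambda>" "1 / \<Lambda> \<le> M" and \<rho>: "0 < \<rho>" "M^8 * \<rho> = 1/3000"
    and s: "0 < s" "s \<le> 1" and a: "\<bar>a\<bar> \<le> \<rho>" and k: "\<bar>k\<bar> \<le> M"
  shows "\<bar>a * s * k\<bar> + 2 * (M + 4 * M\<^sup>2) * (83 * M^5 * \<rho>) / \<Lambda> \<le> 1/2"
proof -
  have "\<bar>a * s * k\<bar> \<le> \<rho> * 1 * M"
    using mult_mono[OF mult_mono[OF a s(2)] k] s \<rho> by (simp add: abs_mult)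
  also have "\<dots> \<le> M^8 * \<rho>"
    using M1 \<rho> power_increasing[of 1 8 M] by (simp add: mult.commute mult_right_mono)
  finally have "\<bar>a * s * k\<bar> \<le> M^8 * \<rho>" .
  moreover have "2 * (M + 4 * M\<^sup>2) * (83 * M^5 * \<rho>) * (1 / \<Lambda>) \<le> 2 * (5 * M\<^sup>2) * (83 * M^5 * \<rho>) * M"
    using M1 \<rho> \<Lambda> by (intro mult_mono) (auto simp: power2_eq_square)
  moreover have "2 * (5 * M\<^sup>2) * (83 * M^5 * \<rho>) * M = 830 * (M^8 * \<rho>)" by algebra
  moreover have "2 * (M + 4 * M\<^sup>2) * (83 * M^5 * \<rho>) / \<Lambda> = 2 * (M + 4 * M\<^sup>2) * (83 * M^5 * \<rho>) * (1 / \<Lambda>)"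
    by simp
  ultimately show ?thesis using \<rho>(2) by linarith
qed

lemma Adelta_comparable:
  assumes H: "local_hyp \<sigma> b x \<Lambda> N" and \<delta>: "0 < \<delta>" "\<delta> \<le> 1"
    and y: "anorm (Adelta \<sigma> b \<delta> x) (x - y) \<le> 1 / (3000 * (N / \<Lambda>)^8)"
  shows "anorm (Adelta \<sigma> b \<delta> x) \<xi> \<le> 2 * anorm (Adelta \<sigma> b \<delta> y) \<xi>"
    and "anorm (Adelta \<sigma> b \<delta> y) \<xi> \<le> 2 * anorm (Adelta \<sigma> b \<delta> x) \<xi>"
proof -
  define M \<rho> s where "M = N / \<Lambda>" and "\<rho> = 1 / (3000 * M^8)" and "s = sqrt \<delta>"
  note bounds = local_hyp_bounds[OF H, folded M_def]
  have \<rho>: "0 < \<rho>" "M^8 * \<rho> = 1/3000" using bounds(4) by (auto simp: \<rho>_def)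
  have s: "0 < s" "s \<le> 1" using \<delta> by (auto simp: s_def)
  have Adelta: "Adelta \<sigma> b \<delta> z = cols (s *\<^sub>R \<sigma> z) (s^3 *\<^sub>R lie b \<sigma> z)" for z
    using \<delta> by (simp add: Adelta_def s_def powr_three_halves)
  have x1: "x \<in> ball x 1" by simp
  have "det (cols (s *\<^sub>R \<sigma> x) (s^3 *\<^sub>R lie b \<sigma> x)) \<noteq> 0"
    using bounds(1) bounds(5)[OF x1] s by (auto simp: det_cols_scaleR)
  then obtain a c where "x - y = a *\<^sub>R (s *\<^sub>R \<sigma> x) + c *\<^sub>R (s^3 *\<^sub>R lie b \<sigma> x)"
    and ac: "\<bar>a\<bar> \<le> \<rho>" "\<bar>c\<bar> \<le> \<rho>"
    using anorm_cols_bound_coordinates y unfolding Adelta \<rho>_def M_def by blast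
  then have h: "y - x = (- (a * s)) *\<^sub>R \<sigma> x + (- (c * s^3)) *\<^sub>R lie b \<sigma> x"
    by (simp add: algebra_simps)
  obtain k where k: "dd \<sigma> \<sigma> x = k *\<^sub>R \<sigma> x" "\<bar>k\<bar> \<le> M" using bounds(8) by blast
  have "0 \<le> N" using H unfolding local_hyp_def by simp
  note displ = C2_bounded_displacement[OF local_hyp_C2_bounded[OF H] this bounds(2,4) \<rho>
      bounds(6,7) s k(1) h ac]
  have "det (cols (\<sigma> y) (lie b \<sigma> y)) \<noteq> 0"
    using bounds(1,5) ball_mem_of_norm_diff_less(2)[OF displ(1)] by force
  then show "anorm (Adelta \<sigma> b \<delta> x) \<xi> \<le> 2 * anorm (Adelta \<sigma> b \<delta> y) \<xi>"
    and "anorm (Adelta \<sigma> b \<delta> y) \<xi> \<le> 2 * anorm (Adelta \<sigma> b \<delta> x) \<xi>"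
    unfolding Adelta
    using anorm_scaled_cols_comparable[OF s bounds(1) bounds(5)[OF x1] _ bounds(6,7) displ(2,3)
        perturbation_size_le_half[OF bounds(4,1,3) \<rho> s ac(1) k(2)]]
    by auto
qed

theorem lemmaA4:
  "\<exists>K1 q1 K2 q2 :: real. 1 \<le> K1 \<and> 1 \<le> q1 \<and> 1 \<le> K2 \<and> 1 \<le> q2 \<and>
    (\<forall>\<sigma> b x \<Lambda> N. local_hyp \<sigma> b x \<Lambda> N \<longrightarrow>
      (let \<rho> = 1 / (K1 * (N / \<Lambda>) powr q1);
           \<delta>s = 1 / (K2 * (N / \<Lambda>) powr q2)
       in \<forall>y \<delta> \<xi>. 0 < \<delta> \<and> \<delta> \<le> \<delta>s \<and> anorm (Adelta \<sigma> b \<delta> x) (x - y) \<le> \<rho> \<longrightarrow>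
            (1/4) * anorm (Adelta \<sigma> b \<delta> x) \<xi> \<le> anorm (Adelta \<sigma> b \<delta> y) \<xi> \<and>
            anorm (Adelta \<sigma> b \<delta> y) \<xi> \<le> 4 * anorm (Adelta \<sigma> b \<delta> x) \<xi>))"
proof (rule exI[of _ 3000], rule exI[of _ 8], rule exI[of _ 1], rule exI[of _ 1],
    unfold Let_def, intro conjI allI impI)
  fix \<sigma> b x \<Lambda> N y \<delta> \<xi>
  assume H: "local_hyp \<sigma> b x \<Lambda> N"
    and a: "0 < \<delta> \<and> \<delta> \<le> 1 / (1 * (N / \<Lambda>) powr 1) \<and>
      anorm (Adelta \<sigma> b \<delta> x) (x - y) \<le> 1 / (3000 * (N / \<Lambda>) powr 8)"
  have \<Lambda>N: "0 < \<Lambda>" "\<Lambda> \<le> 1" "1 \<le> N"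
    using H unfolding local_hyp_def by auto
  then have M: "0 < N / \<Lambda>" by simp
  have p: "(N / \<Lambda>) powr 1 = N / \<Lambda>" "(N / \<Lambda>) powr 8 = (N / \<Lambda>)^8"
    using powr_one[OF less_imp_le[OF M(1)]] powr_realpow[OF M(1), of 8] by simp_all
  have "1 / (N / \<Lambda>) \<le> 1" using \<Lambda>N by (simp add: divide_le_eq)
  with a have "0 < \<delta>" "\<delta> \<le> 1" "anorm (Adelta \<sigma> b \<delta> x) (x - y) \<le> 1 / (3000 * (N / \<Lambda>)^8)"
    unfolding p mult_1 by linarith+
  then have "anorm (Adelta \<sigma> b \<delta> x) \<xi> \<le> 2 * anorm (Adelta \<sigma> b \<delta> y) \<xi>"
    "anorm (Adelta \<sigma> b \<delta> y) \<xi> \<le> 2 * anorm (Adelta \<sigma> b \<delta> x) \<xi>"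
    using Adelta_comparable[OF H] by blast+
  moreover have "0 \<le> anorm (Adelta \<sigma> b \<delta> x) \<xi>" "0 \<le> anorm (Adelta \<sigma> b \<delta> y) \<xi>"
    by (simp_all add: anorm_def)
  ultimately show "(1/4) * anorm (Adelta \<sigma> b \<delta> x) \<xi> \<le> anorm (Adelta \<sigma> b \<delta> y) \<xi>"
    and "anorm (Adelta \<sigma> b \<delta> y) \<xi> \<le> 4 * anorm (Adelta \<sigma> b \<delta> x) \<xi>"
    by linarith+
qed simp_all

end
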